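(* Let $F_i=F$ for all $i\in[A]$, suppose $\sum_{k\ge1}1/F(k)=\infty$ and that $L(k):=F(k)/k$ is increasing. Then there is an almost surely finite random constant $c>0$ such that $\chi_i(n)\ge e^{-cL(n)}$ for all $n\ge1$ and all $i\in[A]$.
   Context: Fix $A\ge2$, $[A]=\{1,\dots,A\}$. The generalized Pólya urn with feedback $F:\mathbb{N}\to(0,\infty)$ is the Markov chain $X(n)\in\mathbb{N}^A$ with $X_i(0)\ge1$ and $\mathbb{P}(X(n+1)=X(n)+e^{(i)}\mid X(n))=F(X_i(n))/\sum_jF(X_j(n))$; $N=\sum_jX_j(0)$ and $\chi_i(n)=X_i(n)/(N+n)$. *)

theory Defs
  imports "HOL-Probability.Probability"
begin

text \<open>Colours are the elements of a finite type 'a (so A = CARD('a)).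
  A configuration is a map 'a \<Rightarrow> nat.  The event that the first n+1 states
  of the process X equal the history h.\<close>
definition urn_hist :: "'m measure \<Rightarrow> (nat \<Rightarrow> 'm \<Rightarrow> 'a \<Rightarrow> nat) \<Rightarrow> nat \<Rightarrow> (nat \<Rightarrow> 'a \<Rightarrow> nat) \<Rightarrow> 'm set"
  where "urn_hist M X n h = {\<omega> \<in> space M. \<forall>k\<le>n. X k \<omega> = h k}"

text \<open>X is a generalized Polya urn with feedback F (same for all colours) and
  deterministic initial configuration x0: the law of X is that of the Markov
  chain which adds a ball of colour i with probability F(X_i)/sum_j F(X_j).\<close>
definition polya_urn :: "'m measure \<Rightarrow> (nat \<Rightarrow> real) \<Rightarrow> ('a::finite \<Rightarrow> nat) \<Rightarrow> (nat \<Rightarrow> 'm \<Rightarrow> 'a \<Rightarrow> nat) \<Rightarrow> bool"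
  where "polya_urn M F x0 X \<longleftrightarrow>
     prob_space M \<and>
     (\<forall>n. X n \<in> M \<rightarrow>\<^sub>M count_space UNIV) \<and>
     (AE \<omega> in M. X 0 \<omega> = x0) \<and>
     (\<forall>n h i. measure M (urn_hist M X n h \<inter> {\<omega>. X (Suc n) \<omega> = (h n)(i := h n i + 1)})
              = measure M (urn_hist M X n h) * (F (h n i) / (\<Sum>j\<in>UNIV. F (h n j))))"

end

theory Submission
  imports Defs
begin

text \<open>With \<open>\<Phi>(z) = \<Sum>\<^bsub>1\<le>k<z\<^esub> 1/F(k)\<close>, the potential
  \<open>D(y) = \<Sum>\<^sub>i (\<Phi>(|y|) - \<Phi>(y\<^sub>i))\<close> of a configuration \<open>y\<close> is a nonnegative
  supermartingale along the urn: adding a ball raises every term by \<open>1/F(|y|)\<close> and lowers the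
  term of the drawn colour \<open>i\<close> by \<open>1/F(y\<^sub>i)\<close>, and since \<open>F(k)/k\<close> is increasing,
  \<open>\<Sum>\<^sub>j F(y\<^sub>j) \<le> F(|y|)\<close>, which makes the expected change \<open>A/F(|y|) - A/\<Sum>\<^sub>j F(y\<^sub>j)\<close>
  nonpositive.  By the maximal inequality \<open>sup\<^sub>n D(X(n))\<close> is almost surely finite.  On the
  other hand \<open>1/k \<le> (F(n)/n)/F(k)\<close> for \<open>k \<le> n\<close>, so
  \<open>ln ((N+n) / X\<^sub>i(n)) \<le> ln (1+N) + (F(n)/n) (\<Phi>(N+n) - \<Phi>(X\<^sub>i(n)))
  \<le> ln (1+N) + (F(n)/n) D(X(n))\<close>, and as \<open>F(n)/n \<ge> F(1)\<close> a bound on \<open>D\<close> becomes the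
  claimed lower bound on \<open>\<chi>\<^sub>i(n)\<close>.\<close>

definition inv_feedback_sum :: "(nat \<Rightarrow> real) \<Rightarrow> nat \<Rightarrow> real" where
  "inv_feedback_sum F z = (\<Sum>k\<in>{1..<z}. 1 / F k)"

definition urn_potential :: "(nat \<Rightarrow> real) \<Rightarrow> ('a::finite \<Rightarrow> nat) \<Rightarrow> real" where
  "urn_potential F y =
     (\<Sum>i\<in>UNIV. inv_feedback_sum F (sum y UNIV) - inv_feedback_sum F (y i))"

lemma inv_feedback_sum_diff:
  assumes "1 \<le> a" "a \<le> b"
  shows "inv_feedback_sum F b - inv_feedback_sum F a = (\<Sum>k\<in>{a..<b}. 1 / F k)"
  using sum.atLeastLessThan_concat[of 1 a b "\<lambda>k. 1 / F k"] assms
  by (simp add: inv_feedback_sum_def)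

lemma inv_feedback_sum_Suc:
  "1 \<le> a \<Longrightarrow> inv_feedback_sum F (Suc a) = inv_feedback_sum F a + 1 / F a"
  by (simp add: inv_feedback_sum_def)

lemma inv_feedback_sum_mono:
  assumes "\<And>k. F k > 0" and "a \<le> b"
  shows "inv_feedback_sum F a \<le> inv_feedback_sum F b"
  unfolding inv_feedback_sum_def using assms by (intro sum_mono2) (auto intro: less_imp_le)

lemma feedback_ratio_mono:
  assumes Lmono: "\<And>k. k \<ge> 1 \<Longrightarrow> F k / real k \<le> F (Suc k) / real (Suc k)"
    and "1 \<le> a" "a \<le> b"
  shows "F a / real a \<le> F b / real b"
  using assms(3)
proof (induction b rule: dec_induct)
  case (step n)
  then show ?case using Lmono[of n] \<open>1 \<le> a\<close> by linarith
qed simp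

lemma le_sum_UNIV:
  fixes y :: "'a::finite \<Rightarrow> nat"
  shows "y i \<le> sum y UNIV"
  by (rule member_le_sum) auto

lemma sum_fun_upd_Suc: "sum ((y::'a::finite \<Rightarrow> nat)(j := y j + 1)) UNIV = Suc (sum y UNIV)"
proof -
  have "sum (y(j := y j + 1)) UNIV = (\<Sum>i\<in>UNIV. y i + (if i = j then 1 else 0))"
    by (intro sum.cong) auto
  then show ?thesis by (simp add: sum.distrib)
qed

lemma urn_potential_ge_component:
  assumes "\<And>k. F k > 0"
  shows "inv_feedback_sum F (sum y UNIV) - inv_feedback_sum F (y i) \<le> urn_potential F y"
  unfolding urn_potential_def
  by (rule member_le_sum) (auto intro: inv_feedback_sum_mono[OF assms le_sum_UNIV])

lemma urn_potential_nonneg: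
  assumes "\<And>k. F k > 0"
  shows "0 \<le> urn_potential F y"
  unfolding urn_potential_def
  by (intro sum_nonneg) (use inv_feedback_sum_mono[OF assms le_sum_UNIV] in auto)

lemma sum_feedback_le_feedback_total:
  fixes y :: "'a::finite \<Rightarrow> nat"
  assumes Lmono: "\<And>k. k \<ge> 1 \<Longrightarrow> F k / real k \<le> F (Suc k) / real (Suc k)"
    and y1: "\<And>j. y j \<ge> 1"
  shows "(\<Sum>j\<in>UNIV. F (y j)) \<le> F (sum y UNIV)"
proof -
  let ?S = "sum y UNIV"
  have S_pos: "real ?S > 0" using y1 le_sum_UNIV[of y] by (metis of_nat_0_less_iff le_trans less_one not_le)
  have "F (y j) \<le> real (y j) * (F ?S / real ?S)" for j
    using feedback_ratio_mono[OF Lmono y1[of j] le_sum_UNIV[of y j]] y1[of j] by (simp add: field_simps)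
  then have "(\<Sum>j\<in>UNIV. F (y j)) \<le> (\<Sum>j\<in>UNIV. real (y j) * (F ?S / real ?S))"
    by (rule sum_mono)
  also have "\<dots> = real ?S * (F ?S / real ?S)"
    by (metis of_nat_sum sum_distrib_right)
  also have "\<dots> = F ?S"
    using S_pos by simp
  finally show ?thesis .
qed

lemma urn_potential_fun_upd_Suc:
  fixes y :: "'a::finite \<Rightarrow> nat"
  assumes "1 \<le> y j" and "1 \<le> sum y UNIV"
  shows "urn_potential F (y(j := y j + 1))
           = urn_potential F y + real CARD('a) / F (sum y UNIV) - 1 / F (y j)"
proof -
  let ?\<Phi> = "inv_feedback_sum F" and ?S = "sum y UNIV"
  have "urn_potential F (y(j := y j + 1))
      = (\<Sum>i\<in>UNIV. (?\<Phi> ?S - ?\<Phi> (y i)) + 1 / F ?S - (if i = j then 1 / F (y j) else 0))"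
    unfolding urn_potential_def sum_fun_upd_Suc
    by (intro sum.cong) (auto simp: inv_feedback_sum_Suc[OF assms(1)] inv_feedback_sum_Suc[OF assms(2)])
  then show ?thesis by (simp add: sum.distrib sum_subtractf urn_potential_def)
qed

lemma urn_potential_drift_le:
  fixes y :: "'a::finite \<Rightarrow> nat"
  assumes Fpos: "\<And>k. F k > 0"
    and Lmono: "\<And>k. k \<ge> 1 \<Longrightarrow> F k / real k \<le> F (Suc k) / real (Suc k)"
    and y1: "\<And>j. y j \<ge> 1"
  shows "(\<Sum>j\<in>UNIV. F (y j) / (\<Sum>l\<in>UNIV. F (y l)) * urn_potential F (y(j := y j + 1)))
           \<le> urn_potential F y"
proof -
  let ?S = "sum y UNIV" and ?W = "\<Sum>l\<in>UNIV. F (y l)" and ?A = "real CARD('a)"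
  have S1: "1 \<le> ?S" using y1 le_sum_UNIV order_trans by blast
  have W_pos: "?W > 0" by (intro sum_pos) (auto intro: Fpos)
  have "(\<Sum>j\<in>UNIV. F (y j) / ?W * urn_potential F (y(j := y j + 1)))
      = (\<Sum>j\<in>UNIV. F (y j) / ?W * (urn_potential F y + ?A / F ?S) - 1 / ?W)"
    using Fpos[THEN order_less_imp_not_eq2] W_pos
    by (intro sum.cong refl) (subst urn_potential_fun_upd_Suc[OF y1 S1], simp add: field_simps)
  also have "\<dots> = urn_potential F y + ?A / F ?S - ?A / ?W"
    using W_pos by (simp add: sum_subtractf sum_distrib_right[symmetric] sum_divide_distrib[symmetric])
  also have "\<dots> \<le> urn_potential F y"
    using W_pos sum_feedback_le_feedback_total[where y = y, OF Lmono y1]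
    by (simp add: divide_left_mono Fpos)
  finally show ?thesis .
qed

lemma ln_div_le_harmonic_sum:
  assumes "1 \<le> x" "x \<le> n"
  shows "ln (real n / real x) \<le> (\<Sum>k\<in>{x..<n}. 1 / real k)"
  using assms(2)
proof (induction n rule: dec_induct)
  case (step n)
  have n_pos: "real n > 0" using step assms by simp
  have "ln (real (Suc n) / real x) = ln (real n / real x) + ln (1 + 1 / real n)"
    using n_pos assms by (simp add: ln_div field_simps flip: ln_mult)
  also have "\<dots> \<le> (\<Sum>k\<in>{x..<n}. 1 / real k) + 1 / real n"
    using step.IH ln_add_one_self_le_self[of "1 / real n"] n_pos by simp
  also have "\<dots> = (\<Sum>k\<in>{x..<Suc n}. 1 / real k)"
    using step by simp
  finally show ?case .
qed (use assms in simp)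

lemma ln_div_le_inv_feedback_sum_diff:
  assumes Fpos: "\<And>k. F k > 0"
    and Lmono: "\<And>k. k \<ge> 1 \<Longrightarrow> F k / real k \<le> F (Suc k) / real (Suc k)"
    and "1 \<le> x" "x \<le> S" "1 \<le> n" "n \<le> S"
  shows "ln (real S / real x)
           \<le> F n / real n * (inv_feedback_sum F S - inv_feedback_sum F x) + ln (real S / real n)"
proof (cases "x \<le> n")
  case True
  let ?L = "F n / real n"
  have "ln (real n / real x) \<le> (\<Sum>k\<in>{x..<n}. 1 / real k)"
    using assms True by (intro ln_div_le_harmonic_sum)
  also have "\<dots> \<le> (\<Sum>k\<in>{x..<n}. ?L * (1 / F k))"
  proof (rule sum_mono)
    fix k assume k: "k \<in> {x..<n}"
    then have "F k / real k \<le> ?L" using assms by (intro feedback_ratio_mono[OF Lmono]) auto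
    then show "1 / real k \<le> ?L * (1 / F k)"
      using k assms Fpos[of k] by (simp add: field_simps)
  qed
  also have "\<dots> = ?L * (inv_feedback_sum F n - inv_feedback_sum F x)"
    using assms True by (simp add: sum_distrib_left inv_feedback_sum_diff)
  also have "\<dots> \<le> ?L * (inv_feedback_sum F S - inv_feedback_sum F x)"
    using assms less_imp_le[OF Fpos[of n]]
    by (intro mult_left_mono) (auto intro: inv_feedback_sum_mono[of F, OF Fpos])
  finally show ?thesis
    using assms by (simp add: ln_div)
next
  case False
  have "ln (real S / real x) \<le> ln (real S / real n)"
    using False assms by (simp add: divide_left_mono)
  moreover have "0 \<le> F n / real n * (inv_feedback_sum F S - inv_feedback_sum F x)"
    using inv_feedback_sum_mono[of F, OF Fpos \<open>x \<le> S\<close>] less_imp_le[OF Fpos[of n]]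
    by (intro mult_nonneg_nonneg) auto
  ultimately show ?thesis by linarith
qed

lemma share_ge_exp_of_urn_potential:
  fixes y :: "'a::finite \<Rightarrow> nat"
  assumes Fpos: "\<And>k. F k > 0"
    and Lmono: "\<And>k. k \<ge> 1 \<Longrightarrow> F k / real k \<le> F (Suc k) / real (Suc k)"
    and y1: "\<And>j. 1 \<le> y j" and total: "sum y UNIV = N + n" and n1: "1 \<le> n"
    and potential: "urn_potential F y < lam"
  shows "exp (- (lam + ln (1 + real N) / F 1) * (F n / real n)) \<le> real (y i) / real (N + n)"
proof -
  let ?S = "N + n" and ?L = "F n / real n"
  have iS: "y i \<le> ?S" using le_sum_UNIV[of y i] total by simp
  have L_ge: "F 1 \<le> ?L" using feedback_ratio_mono[OF Lmono, of 1 n] n1 by simp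
  have ln_Sn: "ln (real ?S / real n) \<le> ln (1 + real N)"
  proof -
    have "real N * 1 \<le> real N * real n" using n1 by (intro mult_left_mono) auto
    then have "real ?S \<le> (1 + real N) * real n" by (simp add: algebra_simps)
    then show ?thesis using n1 by (simp add: pos_divide_le_eq)
  qed
  have d_le: "inv_feedback_sum F ?S - inv_feedback_sum F (y i) \<le> lam"
    using urn_potential_ge_component[where F = F and y = y and i = i, OF Fpos] potential total
    by simp
  have "1 \<le> ?L / F 1" using L_ge Fpos[of 1] le_divide_eq_1_pos by blast
  then have ln_N: "ln (1 + real N) * 1 \<le> ln (1 + real N) * (?L / F 1)"
    by (intro mult_left_mono) auto
  have "ln (real ?S / real (y i))
          \<le> ?L * (inv_feedback_sum F ?S - inv_feedback_sum F (y i)) + ln (real ?S / real n)"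
    using ln_div_le_inv_feedback_sum_diff[OF Fpos Lmono y1 iS n1] n1 by simp
  also have "\<dots> \<le> ?L * lam + ln (1 + real N) * (?L / F 1)"
    using L_ge Fpos[of 1] d_le ln_Sn ln_N by (intro add_mono mult_left_mono) auto
  also have "\<dots> = (lam + ln (1 + real N) / F 1) * ?L"
    by (simp add: algebra_simps)
  finally have "ln (real ?S / real (y i)) \<le> (lam + ln (1 + real N) / F 1) * ?L" .
  moreover have "real (y i) / real ?S = exp (- ln (real ?S / real (y i)))"
    using y1[of i] iS by (simp add: ln_div exp_diff)
  ultimately show ?thesis by (simp add: algebra_simps)
qed

lemma fun_upd_Suc_inj: "(y::'a \<Rightarrow> nat)(j := y j + 1) = y(j' := y j' + 1) \<Longrightarrow> j = j'"
  by (metis fun_upd_apply n_not_Suc_n Suc_eq_plus1)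

locale feedback_urn =
  fixes M :: "'m measure" and F :: "nat \<Rightarrow> real" and x0 :: "'a::finite \<Rightarrow> nat"
    and X :: "nat \<Rightarrow> 'm \<Rightarrow> 'a \<Rightarrow> nat"
  assumes urn: "polya_urn M F x0 X"
    and Fpos: "\<And>k. F k > 0"
    and x0pos: "\<And>i. x0 i \<ge> 1"
    and Lmono: "\<And>k. k \<ge> 1 \<Longrightarrow> F k / real k \<le> F (Suc k) / real (Suc k)"
begin

sublocale prob_space M
  using urn by (simp add: polya_urn_def)

lemma urn_transition:
  "measure M (urn_hist M X n h \<inter> {\<omega>. X (Suc n) \<omega> = (h n)(i := h n i + 1)})
     = measure M (urn_hist M X n h) * (F (h n i) / (\<Sum>j\<in>UNIV. F (h n j)))"
  using urn by (simp add: polya_urn_def)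

lemma X_pred_sets: "{\<omega>\<in>space M. Q (X k \<omega>)} \<in> sets M"
proof -
  have "X k \<in> M \<rightarrow>\<^sub>M count_space UNIV"
    using urn by (simp add: polya_urn_def)
  then have "X k -` {y. Q y} \<inter> space M \<in> sets M"
    by (rule measurable_sets) simp
  then show ?thesis by (simp add: vimage_def Int_def conj_commute)
qed

lemma urn_hist_sets: "urn_hist M X n h \<in> sets M"
proof -
  have "urn_hist M X n h = space M \<inter> (\<Inter>k\<in>{..n}. {\<omega>\<in>space M. X k \<omega> = h k})"
    by (auto simp: urn_hist_def)
  then show ?thesis using X_pred_sets by auto
qed

lemma urn_hist_Suc:
  "urn_hist M X n h \<inter> {\<omega>. X (Suc n) \<omega> = z} = urn_hist M X (Suc n) (h(Suc n := z))"
  by (auto simp: urn_hist_def le_Suc_eq)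

lemma measure_urn_hist_successor:
  "measure M (urn_hist M X (Suc n) (h(Suc n := (h n)(j := h n j + 1))))
     = measure M (urn_hist M X n h) * (F (h n j) / (\<Sum>l\<in>UNIV. F (h n l)))"
  unfolding urn_hist_Suc[symmetric] by (rule urn_transition)

text \<open>The transition probabilities of the possible successors sum to one.\<close>
lemma urn_hist_step_null:
  "urn_hist M X n h - (\<Union>j. {\<omega>. X (Suc n) \<omega> = (h n)(j := h n j + 1)}) \<in> null_sets M"
proof -
  let ?H = "urn_hist M X n h"
  define B where "B j = ?H \<inter> {\<omega>. X (Suc n) \<omega> = (h n)(j := h n j + 1)}" for j
  have B_sets: "range B \<subseteq> sets M"
    unfolding B_def urn_hist_Suc using urn_hist_sets by auto
  have "measure M (\<Union>j. B j) = (\<Sum>j\<in>UNIV. measure M (B j))"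
    using fun_upd_Suc_inj[of "h n"] B_sets
    by (intro finite_measure_finite_Union) (auto simp: disjoint_family_on_def B_def)
  also have "\<dots> = (\<Sum>j\<in>UNIV. measure M ?H * (F (h n j) / (\<Sum>j\<in>UNIV. F (h n j))))"
    unfolding B_def urn_transition ..
  also have "\<dots> = measure M ?H * ((\<Sum>j\<in>UNIV. F (h n j)) / (\<Sum>j\<in>UNIV. F (h n j)))"
    by (simp only: sum_distrib_left[symmetric] sum_divide_distrib[symmetric])
  also have "\<dots> = measure M ?H"
    using sum_pos[of UNIV "\<lambda>j. F (h n j)"] Fpos by simp
  finally have "measure M (\<Union>j. B j) = measure M ?H" .
  moreover have U_sets: "(\<Union>j. B j) \<in> sets M"
    using B_sets by auto
  moreover have "(\<Union>j. B j) \<subseteq> ?H"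
    by (auto simp: B_def)
  ultimately have "measure M (?H - (\<Union>j. B j)) = 0"
    using finite_measure_Diff[OF urn_hist_sets U_sets] by simp
  moreover have "?H - (\<Union>j. B j) \<in> sets M"
    using U_sets urn_hist_sets by auto
  moreover have "?H - (\<Union>j. B j) = ?H - (\<Union>j. {\<omega>. X (Suc n) \<omega> = (h n)(j := h n j + 1)})"
    by (auto simp: B_def)
  ultimately show ?thesis
    by (simp add: null_sets_def emeasure_eq_measure)
qed

lemma urn_hist_split_le:
  assumes "S \<in> sets M"
  shows "measure M (urn_hist M X n h \<inter> S)
           \<le> (\<Sum>j\<in>UNIV. measure M (urn_hist M X (Suc n) (h(Suc n := (h n)(j := h n j + 1))) \<inter> S))"
proof -
  let ?H' = "\<lambda>j. urn_hist M X (Suc n) (h(Suc n := (h n)(j := h n j + 1)))"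
  have "AE \<omega> in M. \<omega> \<in> urn_hist M X n h \<inter> S \<longrightarrow> \<omega> \<in> (\<Union>j\<in>UNIV. ?H' j \<inter> S)"
    using AE_not_in[OF urn_hist_step_null] by eventually_elim (auto simp flip: urn_hist_Suc)
  then have "measure M (urn_hist M X n h \<inter> S) \<le> measure M (\<Union>j\<in>UNIV. ?H' j \<inter> S)"
    using assms urn_hist_sets by (intro finite_measure_mono_AE) auto
  also have "\<dots> \<le> (\<Sum>j\<in>UNIV. measure M (?H' j \<inter> S))"
    using assms urn_hist_sets by (intro finite_measure_subadditive_finite) auto
  finally show ?thesis .
qed

definition admissible :: "nat \<Rightarrow> ('a \<Rightarrow> nat) \<Rightarrow> bool" where
  "admissible k y \<longleftrightarrow> (\<forall>j. 1 \<le> y j) \<and> sum y UNIV = sum x0 UNIV + k"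

text \<open>Inadmissible configurations count as exceedances, so that the maximal inequality below
  yields admissibility of the whole path along with the bound on the potential.\<close>
definition potential_exceeds :: "real \<Rightarrow> nat \<Rightarrow> ('a \<Rightarrow> nat) \<Rightarrow> bool" where
  "potential_exceeds l k y \<longleftrightarrow> \<not> admissible k y \<or> l \<le> urn_potential F y"

definition exceedance :: "real \<Rightarrow> nat \<Rightarrow> nat \<Rightarrow> 'm set" where
  "exceedance l n m = {\<omega>\<in>space M. \<exists>k\<in>{n..n+m}. potential_exceeds l k (X k \<omega>)}"

lemma admissible_fun_upd_Suc:
  "admissible k y \<Longrightarrow> admissible (Suc k) (y(j := y j + 1))"
  unfolding admissible_def sum_fun_upd_Suc by simp

lemma exceedance_sets: "exceedance l n m \<in> sets M"
proof -
  have "exceedance l n m = (\<Union>k\<in>{n..n+m}. {\<omega>\<in>space M. potential_exceeds l k (X k \<omega>)})"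
    by (auto simp: exceedance_def)
  then show ?thesis using X_pred_sets by auto
qed

lemma exceedance_Suc:
  "exceedance l n (Suc m)
     = {\<omega>\<in>space M. potential_exceeds l n (X n \<omega>)} \<union> exceedance l (Suc n) m"
proof -
  have "{n..n + Suc m} = insert n {Suc n..Suc n + m}" by auto
  then show ?thesis by (auto simp: exceedance_def)
qed

text \<open>Doob's maximal inequality for the nonnegative supermartingale \<open>urn_potential F (X k)\<close>,
  conditioned on a history up to time \<open>n\<close>.\<close>
lemma measure_hist_exceedance_le:
  assumes l: "l > 0" and "admissible n (h n)"
  shows "measure M (urn_hist M X n h \<inter> exceedance l n m)
           \<le> measure M (urn_hist M X n h) * (urn_potential F (h n) / l)"
proof -
  have exceeded_now: "measure M (urn_hist M X n h \<inter> S)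
      \<le> measure M (urn_hist M X n h) * (urn_potential F (h n) / l)"
    if "l \<le> urn_potential F (h n)" for n h S
    using that l urn_hist_sets
    by (intro order_trans[OF finite_measure_mono mult_le_cancel_left1[THEN iffD2]]) auto
  show ?thesis
    using assms(2)
  proof (induction m arbitrary: n h)
    case 0
    then have "urn_hist M X n h \<inter> exceedance l n 0 = {}" if "\<not> l \<le> urn_potential F (h n)"
      using that by (auto simp: urn_hist_def exceedance_def potential_exceeds_def)
    then show ?case
      using exceeded_now l urn_potential_nonneg[where F = F and y = "h n", OF Fpos] by fastforce
  next
    case (Suc m)
    let ?H = "urn_hist M X n h" and ?y = "h n"
    define hj where "hj j = h(Suc n := ?y(j := ?y j + 1))" for j
    show ?case
    proof (cases "l \<le> urn_potential F ?y")
      case False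
      have y1: "\<And>j. 1 \<le> ?y j" using Suc.prems by (simp add: admissible_def)
      have "?H \<inter> exceedance l n (Suc m) = ?H \<inter> exceedance l (Suc n) m"
        using False Suc.prems by (auto simp: exceedance_Suc urn_hist_def potential_exceeds_def)
      then have "measure M (?H \<inter> exceedance l n (Suc m))
          \<le> (\<Sum>j\<in>UNIV. measure M (urn_hist M X (Suc n) (hj j) \<inter> exceedance l (Suc n) m))"
        unfolding hj_def by (simp only: urn_hist_split_le[OF exceedance_sets])
      also have "\<dots> \<le> (\<Sum>j\<in>UNIV. measure M (urn_hist M X (Suc n) (hj j))
                                   * (urn_potential F (hj j (Suc n)) / l))"
        unfolding hj_def
        by (intro sum_mono Suc.IH) (simp only: fun_upd_same admissible_fun_upd_Suc[OF Suc.prems])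
      also have "\<dots> = measure M ?H
          * (\<Sum>j\<in>UNIV. F (?y j) / (\<Sum>l\<in>UNIV. F (?y l)) * urn_potential F (?y(j := ?y j + 1))) / l"
        unfolding hj_def measure_urn_hist_successor fun_upd_same
        by (simp add: sum_distrib_left sum_divide_distrib mult.assoc)
      also have "\<dots> \<le> measure M ?H * urn_potential F ?y / l"
        using urn_potential_drift_le[where F = F and y = ?y, OF Fpos Lmono y1] l
        by (intro divide_right_mono mult_left_mono) auto
      finally show ?thesis by simp
    qed (rule exceeded_now)
  qed
qed

lemma prob_potential_ever_exceeds_le:
  assumes l: "l > 0"
  shows "measure M {\<omega>\<in>space M. \<exists>k. potential_exceeds l k (X k \<omega>)} \<le> urn_potential F x0 / l"
proof -
  let ?H = "urn_hist M X 0 (\<lambda>_. x0)"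
  have x0_admissible: "admissible 0 x0" using x0pos by (simp add: admissible_def)
  have "AE \<omega> in M. X 0 \<omega> = x0" using urn by (simp add: polya_urn_def)
  with AE_space have H_ae: "AE \<omega> in M. \<omega> \<in> ?H" by eventually_elim (auto simp: urn_hist_def)
  have bound: "measure M (exceedance l 0 m) \<le> urn_potential F x0 / l" for m
  proof -
    have "measure M (exceedance l 0 m) \<le> measure M (?H \<inter> exceedance l 0 m)"
      using H_ae urn_hist_sets exceedance_sets by (intro finite_measure_mono_AE) auto
    also have "\<dots> \<le> measure M ?H * (urn_potential F x0 / l)"
      using measure_hist_exceedance_le[OF l, of 0 "\<lambda>_. x0"] x0_admissible by simp
    also have "\<dots> \<le> urn_potential F x0 / l"
      using l urn_potential_nonneg[where F = F and y = x0, OF Fpos] by (intro mult_left_le_one_le) auto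
    finally show ?thesis .
  qed
  have "(\<lambda>m. measure M (exceedance l 0 m)) \<longlonglongrightarrow> measure M (\<Union>m. exceedance l 0 m)"
  proof (rule finite_Lim_measure_incseq)
    show "range (\<lambda>m. exceedance l 0 m) \<subseteq> sets M" using exceedance_sets by blast
    show "incseq (\<lambda>m. exceedance l 0 m)" by (auto simp: incseq_def exceedance_def)
  qed
  then have "measure M (\<Union>m. exceedance l 0 m) \<le> urn_potential F x0 / l"
    using bound by (intro LIMSEQ_le_const2) auto
  moreover have "(\<Union>m. exceedance l 0 m) = {\<omega>\<in>space M. \<exists>k. potential_exceeds l k (X k \<omega>)}"
    by (auto simp: exceedance_def) (meson atLeastAtMost_iff le0 order_refl)
  ultimately show ?thesis by simp
qed

lemma AE_urn_potential_bounded: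
  "AE \<omega> in M. \<exists>l. \<forall>k. admissible k (X k \<omega>) \<and> urn_potential F (X k \<omega>) < l"
proof -
  define Z where "Z = (\<Inter>l. {\<omega>\<in>space M. \<exists>k. potential_exceeds (real (Suc l)) k (X k \<omega>)})"
  have Z_sets: "Z \<in> sets M"
    unfolding Z_def using X_pred_sets by auto
  have "measure M Z \<le> urn_potential F x0 / real (Suc l)" for l
    using Z_sets X_pred_sets
    by (intro order_trans[OF finite_measure_mono prob_potential_ever_exceeds_le])
      (auto simp: Z_def)
  moreover have "(\<lambda>l. urn_potential F x0 / real (Suc l)) \<longlonglongrightarrow> 0"
    using LIMSEQ_Suc[OF lim_const_over_n[of "urn_potential F x0"]] by simp
  ultimately have "measure M Z \<le> 0"
    by (intro LIMSEQ_le_const) auto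
  then have "Z \<in> null_sets M"
    using Z_sets measure_nonneg[of M Z] by (simp add: null_sets_def emeasure_eq_measure)
  then show ?thesis
    by (rule AE_I') (auto simp: Z_def potential_exceeds_def, metis not_le)
qed

end

theorem mainTheorem18:
  fixes M :: "'m measure" and F :: "nat \<Rightarrow> real" and x0 :: "'a::finite \<Rightarrow> nat"
    and X :: "nat \<Rightarrow> 'm \<Rightarrow> 'a \<Rightarrow> nat"
  assumes A2: "CARD('a) \<ge> 2"
    and Fpos: "\<And>k. F k > 0"
    and x0pos: "\<And>i. x0 i \<ge> 1"
    and urn: "polya_urn M F x0 X"
    and diverge: "\<not> summable (\<lambda>k. 1 / F (Suc k))"
    and Lmono: "\<And>k. k \<ge> 1 \<Longrightarrow> F k / real k \<le> F (Suc k) / real (Suc k)"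
  shows "AE \<omega> in M. \<exists>c>0. \<forall>n\<ge>1. \<forall>i.
           real (X n \<omega> i) / real ((\<Sum>j\<in>UNIV. x0 j) + n) \<ge> exp (- c * (F n / real n))"
proof -
  interpret feedback_urn M F x0 X
    using urn Fpos x0pos Lmono by unfold_locales
  let ?N = "\<Sum>j\<in>UNIV. x0 j"
  show ?thesis
    using AE_urn_potential_bounded
  proof (rule eventually_mono)
    fix \<omega> assume "\<exists>l. \<forall>k. admissible k (X k \<omega>) \<and> urn_potential F (X k \<omega>) < l"
    then obtain l where admissible: "\<And>k. admissible k (X k \<omega>)"
      and bounded: "\<And>k. urn_potential F (X k \<omega>) < l"
      by blast
    define c where "c = l + ln (1 + real ?N) / F 1"
    have "0 < l"
      using bounded[of 0] urn_potential_nonneg[where F = F and y = "X 0 \<omega>", OF Fpos] by linarith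
    then have "0 < c"
      unfolding c_def using Fpos[of 1] by (intro add_pos_nonneg divide_nonneg_pos ln_ge_zero) (auto simp: sum_nonneg)
    moreover have "exp (- c * (F n / real n)) \<le> real (X n \<omega> i) / real (?N + n)" if "1 \<le> n" for n i
      using share_ge_exp_of_urn_potential[OF Fpos Lmono _ _ that bounded] admissible[of n]
      unfolding c_def admissible_def by blast
    ultimately show "\<exists>c>0. \<forall>n\<ge>1. \<forall>i. real (X n \<omega> i) / real (?N + n) \<ge> exp (- c * (F n / real n))"
      by blast
  qed
qed

end
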